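(* Let $n\ge2$ and $\rho\in\mathbb{R}\setminus\{-1,0,1\}$. Then $K_n(\rho)=\left[\rho^{|j-k|}\right]_{j,k=1}^n$ has $n$ distinct real eigenvalues. *)

theory Defs
  imports "Jordan_Normal_Form.Char_Poly"
begin

text \<open>The Kac-Murdock-Szego matrix K_n(rho) with entries rho^|j-k|, indexed 0..n-1
  (a shift of the paper's 1..n indexing, which leaves |j-k| unchanged).\<close>
definition kms_matrix :: "nat \<Rightarrow> real \<Rightarrow> real mat" where
  "kms_matrix n \<rho> = mat n n (\<lambda>(j, k). \<rho> ^ (if j \<le> k then k - j else j - k))"

end

theory Submission
  imports Defs
begin

text \<open>Let \<open>T\<close> be the symmetric tridiagonal matrix with diagonal \<open>1, 1 + \<rho>\<^sup>2, \<dots>, 1 + \<rho>\<^sup>2, 1\<close>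
  and off-diagonal entries \<open>-\<rho>\<close>. Then \<open>T K = K T = (1 - \<rho>\<^sup>2) I\<close>, so \<open>e \<mapsto> (1 - \<rho>\<^sup>2) / e\<close> is a
  bijection from the eigenvalues of \<open>K\<close> onto those of \<open>T\<close>. As \<open>\<rho> \<noteq> 0\<close>, the rows of \<open>T v = \<mu> v\<close>
  determine \<open>v\<close> from its first coordinate, and \<open>\<mu>\<close> is an eigenvalue of \<open>T\<close> iff \<open>p\<^sub>n(\<mu>) = 0\<close>,
  where \<open>p\<^sub>0 = 1\<close>, \<open>p\<^sub>1 = x - a\<^sub>0\<close> and \<open>p\<^sub>k\<^sub>+\<^sub>1 = (x - a\<^sub>k) p\<^sub>k - \<rho>\<^sup>2 p\<^sub>k\<^sub>-\<^sub>1\<close> for the diagonal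
  entries \<open>a\<^sub>k\<close>. At a root of \<open>p\<^sub>k\<close> we have \<open>p\<^sub>k\<^sub>+\<^sub>1 = -\<rho>\<^sup>2 p\<^sub>k\<^sub>-\<^sub>1\<close>, so if the roots of
  \<open>p\<^sub>k\<^sub>-\<^sub>1\<close> and \<open>p\<^sub>k\<close> interlace, then \<open>p\<^sub>k\<^sub>+\<^sub>1\<close> alternates in sign on the roots of \<open>p\<^sub>k\<close> and,
  by the intermediate value theorem, has a root between any two of them and one beyond each
  end. Hence \<open>p\<^sub>n\<close> has \<open>n\<close> distinct real roots.\<close>

section \<open>Real-rooted polynomials and three-term recurrences\<close>

lemma strict_mono_on_lessThanI:
  fixes f :: "nat \<Rightarrow> 'a :: order"
  assumes "\<And>i. Suc i < k \<Longrightarrow> f i < f (Suc i)"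
  shows "strict_mono_on {..<k} f"
proof (rule strict_mono_onI)
  show "f i < f j" if "i \<in> {..<k}" "j \<in> {..<k}" "i < j" for i j
    using that
  proof (induction j)
    case (Suc j)
    then show ?case
      using assms[of j] by (cases "i = j") (auto intro: order.strict_trans)
  qed simp
qed

lemma monic_poly_pos_at_top:
  fixes p :: "real poly"
  assumes "monic p"
  shows "\<exists>U. \<forall>x\<ge>U. poly p x > 0"
  using poly_pinfty_gt_lc[of p] assms by (metis less_numeral_extra(1) order_less_le_trans)

lemma monic_poly_sign_at_bot:
  fixes p :: "real poly"
  assumes "monic p"
  shows "\<exists>L. \<forall>x\<le>L. (-1) ^ degree p * poly p x > 0"
proof -
  define q where "q = Polynomial.smult ((-1) ^ degree p) (p \<circ>\<^sub>p [:0, -1:])"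
  have "degree (p \<circ>\<^sub>p [:0, -1:]) = degree p"
    by (simp add: degree_pcompose)
  moreover have "lead_coeff (p \<circ>\<^sub>p [:0, -1:]) = (-1) ^ degree p"
    using assms lead_coeff_comp[of "[:0, -1:]" p] by simp
  ultimately have "lead_coeff q = 1"
    by (simp add: q_def power_mult_distrib[symmetric])
  then obtain U where U: "\<forall>x\<ge>U. poly q x > 0"
    using monic_poly_pos_at_top by blast
  have "(-1) ^ degree p * poly p x > 0" if "x \<le> - U" for x
    using U[rule_format, of "- x"] that by (simp add: q_def poly_pcompose)
  then show ?thesis by blast
qed

lemma alternating_signs_mult_neg:
  fixes x y :: real
  assumes "(-1) ^ Suc e * x > 0" "(-1) ^ e * y > 0"
  shows "x * y < 0"
  using assms by (cases "even e") (auto simp: mult_less_0_iff)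

lemma poly_roots_between_alternating_signs:
  fixes p :: "real poly" and t :: "nat \<Rightarrow> real"
  assumes "\<And>j. j < m \<Longrightarrow> t j < t (Suc j)"
    and "\<And>j. j \<le> m \<Longrightarrow> (-1) ^ (m - j) * poly p (t j) > 0"
  shows "\<exists>s. \<forall>j<m. t j < s j \<and> s j < t (Suc j) \<and> poly p (s j) = 0"
proof -
  have "\<exists>x. t j < x \<and> x < t (Suc j) \<and> poly p x = 0" if "j < m" for j
  proof -
    have "m - j = Suc (m - Suc j)" using that by simp
    then have "poly p (t j) * poly p (t (Suc j)) < 0"
      using assms(2)[of j] assms(2)[of "Suc j"] that by (intro alternating_signs_mult_neg) simp_all
    then show ?thesis using poly_IVT assms(1) that by blast
  qed
  then show ?thesis by metis
qed

lemma monic_eq_prod_linear_factors: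
  fixes p :: "'a :: idom poly"
  assumes "monic p" "degree p = k" "inj_on r {..<k}"
    and "\<And>i. i < k \<Longrightarrow> poly p (r i) = 0"
  shows "p = (\<Prod>i<k. [:- r i, 1:])"
  using assms
proof (induction k arbitrary: p)
  case 0
  then show ?case using monic_degree_0[of p] by simp
next
  case (Suc k)
  obtain q where p: "p = [:- r k, 1:] * q"
    using Suc.prems(4)[of k] by (metis dvdE lessI poly_eq_0_iff_dvd)
  have "q \<noteq> 0" using Suc.prems(2) p by auto
  have "monic q" using Suc.prems(1) p by (simp add: lead_coeff_mult del: mult_pCons_left)
  moreover have "degree q = k"
    using Suc.prems(2) p \<open>q \<noteq> 0\<close> by (simp add: degree_mult_eq del: mult_pCons_left)
  moreover have "inj_on r {..<k}" using Suc.prems(3) by (rule inj_on_subset) auto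
  moreover have "poly q (r i) = 0" if "i < k" for i
  proof -
    have "r i \<noteq> r k" using Suc.prems(3) that by (auto dest: inj_onD)
    then show ?thesis using Suc.prems(4)[of i] that by (simp add: p)
  qed
  ultimately have "q = (\<Prod>i<k. [:- r i, 1:])" by (rule Suc.IH)
  then show ?case unfolding p prod.lessThan_Suc by (rule ssubst) (rule mult.commute)
qed

lemma roots_prod_linear_factors:
  fixes r :: "nat \<Rightarrow> 'a :: idom"
  shows "{x. poly (\<Prod>i<k. [:- r i, 1:]) x = 0} = r ` {..<k}"
proof -
  have "poly (\<Prod>i<k. [:- r i, 1:]) x = (\<Prod>i<k. x - r i)" for x
    by (simp add: poly_prod)
  then show ?thesis by (auto simp: prod_zero_iff)
qed

lemma sign_prod_linear_factors:
  fixes r :: "nat \<Rightarrow> real"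
  assumes "j \<le> k" "\<And>i. i < j \<Longrightarrow> r i < x" "\<And>i. j \<le> i \<Longrightarrow> i < k \<Longrightarrow> x < r i"
  shows "(-1) ^ (k - j) * poly (\<Prod>i<k. [:- r i, 1:]) x > 0"
proof -
  have "poly (\<Prod>i<k. [:- r i, 1:]) x = (\<Prod>i<j. x - r i) * (\<Prod>i=j..<k. x - r i)"
    using prod.atLeastLessThan_concat[of 0 j k "\<lambda>i. x - r i"] assms(1)
    by (simp add: poly_prod atLeast0LessThan)
  also have "(\<Prod>i=j..<k. x - r i) = (-1) ^ (k - j) * (\<Prod>i=j..<k. r i - x)"
    by (subst prod_diff_swap) simp
  finally have "(-1) ^ (k - j) * poly (\<Prod>i<k. [:- r i, 1:]) x
      = (\<Prod>i<j. x - r i) * (\<Prod>i=j..<k. r i - x)"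
    by (simp add: power_mult_distrib[symmetric])
  also have "\<dots> > 0"
    using assms by (intro mult_pos_pos prod_pos) auto
  finally show ?thesis .
qed

fun three_term_poly :: "(nat \<Rightarrow> 'a :: comm_ring_1) \<Rightarrow> 'a \<Rightarrow> nat \<Rightarrow> 'a poly" where
  "three_term_poly a b 0 = 1"
| "three_term_poly a b (Suc 0) = [:- a 0, 1:]"
| "three_term_poly a b (Suc (Suc k)) =
     [:- a (Suc k), 1:] * three_term_poly a b (Suc k) - Polynomial.smult b (three_term_poly a b k)"

lemma three_term_poly_monic_degree:
  fixes a :: "nat \<Rightarrow> 'a :: idom"
  shows "monic (three_term_poly a b k) \<and> degree (three_term_poly a b k) = k"
proof (induction a b k rule: three_term_poly.induct)
  case (3 a b k)
  let ?p = "[:- a (Suc k), 1:] * three_term_poly a b (Suc k)"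
  have q: "monic (three_term_poly a b (Suc k))" "three_term_poly a b (Suc k) \<noteq> 0"
    using "3.IH"(1) by auto
  have p: "monic ?p" "degree ?p = Suc (Suc k)"
    using monic_mult[OF _ q(1), of "[:- a (Suc k), 1:]"]
      degree_monic_mult[OF _ q(2), of "[:- a (Suc k), 1:]"] "3.IH"(1)
    by (simp_all del: mult_pCons_left)
  define s where "s = Polynomial.smult b (three_term_poly a b k)"
  have s: "degree s < Suc (Suc k)"
    using "3.IH"(2) degree_smult_le[of b "three_term_poly a b k"] by (simp add: s_def)
  then have "degree (?p - s) = Suc (Suc k)"
    using degree_add_eq_left[of "- s" ?p] p(2) by simp
  moreover have "coeff (?p - s) (Suc (Suc k)) = 1"
    using p s by (simp add: coeff_eq_0 del: mult_pCons_left)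
  ultimately show ?case
    unfolding three_term_poly.simps(3) s_def[symmetric] by simp
qed auto

lemma monic_three_term_poly: "monic (three_term_poly a b k :: 'a :: idom poly)"
  using three_term_poly_monic_degree by blast

lemma degree_three_term_poly: "degree (three_term_poly a b k :: 'a :: idom poly) = k"
  using three_term_poly_monic_degree by blast

lemma poly_three_term_poly_at_root:
  assumes "0 < k" "poly (three_term_poly a b k) x = 0"
  shows "poly (three_term_poly a b (Suc k)) x = - b * poly (three_term_poly a b (k - 1)) x"
  using assms by (cases k) auto

lemma interlacing_sign_points:
  fixes Q N :: "real poly" and r :: "nat \<Rightarrow> real"
  assumes "b > 0" "monic N" "degree N = Suc k" and r: "strict_mono_on {..<k} r"
    and Q_sign: "\<And>i. i < k \<Longrightarrow> (-1) ^ (k - 1 - i) * poly Q (r i) > 0"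
    and N_at_r: "\<And>i. i < k \<Longrightarrow> poly N (r i) = - b * poly Q (r i)"
  shows "\<exists>t. (\<forall>j<Suc k. t j < t (Suc j)) \<and> (\<forall>j\<le>Suc k. (-1) ^ (Suc k - j) * poly N (t j) > 0)
           \<and> (\<forall>j. 0 < j \<and> j \<le> k \<longrightarrow> t j = r (j - 1))"
proof -
  obtain U where U: "\<forall>x\<ge>U. poly N x > 0"
    using monic_poly_pos_at_top[OF assms(2)] by blast
  obtain L where L: "\<forall>x\<le>L. (-1) ^ Suc k * poly N x > 0"
    using monic_poly_sign_at_bot[OF assms(2)] assms(3) by auto
  \<comment> \<open>For \<open>k = 0\<close> the values \<open>r 0 = r (k - 1)\<close> are junk, but still \<open>t 0 < t 1\<close>.\<close>
  define t where "t j = (if j = 0 then min L (r 0 - 1)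
    else if j \<le> k then r (j - 1) else max U (r (k - 1) + 1))" for j
  have "t j < t (Suc j)" if j: "j < Suc k" for j
  proof -
    consider "j = 0" | "0 < j" "j < k" | "0 < j" "j = k"
      using j by linarith
    then show ?thesis
    proof cases
      case 1
      then show ?thesis by (cases k) (auto simp: t_def)
    next
      case 2
      then show ?thesis using strict_mono_onD[OF r, of "j - 1" j] by (simp add: t_def)
    qed (auto simp: t_def)
  qed
  moreover have "(-1) ^ (Suc k - j) * poly N (t j) > 0" if j: "j \<le> Suc k" for j
  proof -
    consider "j = 0" | "0 < j" "j \<le> k" | "j = Suc k" using j by linarith
    then show ?thesis
    proof cases
      case 1
      then show ?thesis using L by (simp add: t_def)
    next
      case 2
      then have "Suc k - j = Suc (k - 1 - (j - 1))" "j - 1 < k" by auto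
      then have "(-1) ^ (Suc k - j) * poly N (t j)
          = b * ((-1) ^ (k - 1 - (j - 1)) * poly Q (r (j - 1)))"
        using 2 N_at_r[of "j - 1"] by (simp add: t_def)
      then show ?thesis using Q_sign[of "j - 1"] \<open>b > 0\<close> \<open>j - 1 < k\<close> by simp
    next
      case 3
      then show ?thesis using U by (simp add: t_def)
    qed
  qed
  ultimately show ?thesis by (intro exI[of _ t]) (auto simp: t_def)
qed

lemma interlacing_step:
  fixes P Q N :: "real poly" and r :: "nat \<Rightarrow> real"
  assumes "b > 0" "monic N" "degree N = Suc k"
    and r: "strict_mono_on {..<k} r" and P: "P = (\<Prod>i<k. [:- r i, 1:])"
    and "\<And>i. i < k \<Longrightarrow> (-1) ^ (k - 1 - i) * poly Q (r i) > 0"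
    and "\<And>i. i < k \<Longrightarrow> poly N (r i) = - b * poly Q (r i)"
  shows "\<exists>s. strict_mono_on {..<Suc k} s \<and> N = (\<Prod>i<Suc k. [:- s i, 1:])
           \<and> (\<forall>i<Suc k. (-1) ^ (k - i) * poly P (s i) > 0)"
proof -
  obtain t where t_mono: "\<And>j. j < Suc k \<Longrightarrow> t j < t (Suc j)"
    and t_sign: "\<And>j. j \<le> Suc k \<Longrightarrow> (-1) ^ (Suc k - j) * poly N (t j) > 0"
    and t_r: "\<And>j. 0 < j \<Longrightarrow> j \<le> k \<Longrightarrow> t j = r (j - 1)"
    using interlacing_sign_points[OF assms(1-4,6,7)] by blast
  obtain s where s: "\<And>j. j < Suc k \<Longrightarrow> t j < s j \<and> s j < t (Suc j) \<and> poly N (s j) = 0"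
    using poly_roots_between_alternating_signs[of "Suc k" t N, OF t_mono t_sign] by blast
  have s_mono: "strict_mono_on {..<Suc k} s"
  proof (rule strict_mono_on_lessThanI)
    fix i assume "Suc i < Suc k"
    then show "s i < s (Suc i)" using s[of i] s[of "Suc i"] by force
  qed
  have "N = (\<Prod>i<Suc k. [:- s i, 1:])"
    using s by (intro monic_eq_prod_linear_factors assms(2,3) strict_mono_on_imp_inj_on[OF s_mono]) auto
  moreover have "(-1) ^ (k - j) * poly P (s j) > 0" if "j < Suc k" for j
    unfolding P
  proof (rule sign_prod_linear_factors)
    show "r i < s j" if "i < j" for i
    proof -
      have "r i \<le> r (j - 1)"
        using \<open>i < j\<close> \<open>j < Suc k\<close> by (intro strict_mono_on_leD[OF r]) auto
      also have "r (j - 1) = t j" using \<open>i < j\<close> \<open>j < Suc k\<close> by (simp add: t_r)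
      finally show ?thesis using s[OF \<open>j < Suc k\<close>] by linarith
    qed
    show "s j < r i" if "j \<le> i" "i < k" for i
    proof -
      have "t (Suc j) = r j" using that by (simp add: t_r)
      also have "r j \<le> r i" using that by (intro strict_mono_on_leD[OF r]) auto
      finally show ?thesis using s[OF \<open>j < Suc k\<close>] by linarith
    qed
  qed (use that in simp)
  ultimately show ?thesis using s_mono by blast
qed

lemma three_term_poly_interlacing:
  fixes a :: "nat \<Rightarrow> real"
  assumes "b > 0"
  shows "\<exists>r. strict_mono_on {..<k} r \<and> three_term_poly a b k = (\<Prod>i<k. [:- r i, 1:])
           \<and> (\<forall>i<k. (-1) ^ (k - 1 - i) * poly (three_term_poly a b (k - 1)) (r i) > 0)"
proof (induction k)
  case 0
  show ?case by (simp add: strict_mono_on_def)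
next
  case (Suc k)
  then obtain r where r: "strict_mono_on {..<k} r"
    and P: "three_term_poly a b k = (\<Prod>i<k. [:- r i, 1:])"
    and Q_sign: "\<forall>i<k. (-1) ^ (k - 1 - i) * poly (three_term_poly a b (k - 1)) (r i) > 0"
    by blast
  have "poly (three_term_poly a b k) (r i) = 0" if "i < k" for i
    using that roots_prod_linear_factors[of r k] unfolding P by blast
  then have "poly (three_term_poly a b (Suc k)) (r i) = - b * poly (three_term_poly a b (k - 1)) (r i)"
    if "i < k" for i
    using that by (intro poly_three_term_poly_at_root) auto
  then have "\<exists>s. strict_mono_on {..<Suc k} s
      \<and> three_term_poly a b (Suc k) = (\<Prod>i<Suc k. [:- s i, 1:])
      \<and> (\<forall>i<Suc k. (-1) ^ (k - i) * poly (three_term_poly a b k) (s i) > 0)"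
    using Q_sign by (intro interlacing_step[OF assms monic_three_term_poly degree_three_term_poly r P])
      auto
  then show ?case by (simp only: diff_Suc_1)
qed

lemma card_roots_three_term_poly:
  fixes a :: "nat \<Rightarrow> real"
  assumes "b > 0"
  shows "card {x. poly (three_term_poly a b k) x = 0} = k"
proof -
  obtain r where "strict_mono_on {..<k} r" "three_term_poly a b k = (\<Prod>i<k. [:- r i, 1:])"
    using three_term_poly_interlacing[OF assms] by blast
  then show ?thesis
    by (simp add: roots_prod_linear_factors card_image strict_mono_on_imp_inj_on)
qed

section \<open>Eigenvalues of Jacobi matrices\<close>

definition jacobi_mat :: "nat \<Rightarrow> (nat \<Rightarrow> 'a) \<Rightarrow> 'a \<Rightarrow> 'a :: zero mat" where
  "jacobi_mat n a \<beta> =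
     mat n n (\<lambda>(i, j). if i = j then a i else if Suc i = j \<or> Suc j = i then \<beta> else 0)"

lemma jacobi_mat_carrier [simp]: "jacobi_mat n a \<beta> \<in> carrier_mat n n"
  by (simp add: jacobi_mat_def)

lemma dim_jacobi_mat [simp]:
  "dim_row (jacobi_mat n a \<beta>) = n" "dim_col (jacobi_mat n a \<beta>) = n"
  by (simp_all add: jacobi_mat_def)

lemma jacobi_mat_mult_vec:
  fixes a :: "nat \<Rightarrow> 'a :: comm_semiring_1"
  assumes "v \<in> carrier_vec n" "i < n"
  shows "(jacobi_mat n a \<beta> *\<^sub>v v) $ i =
    (if 0 < i then \<beta> * v $ (i - 1) else 0) + a i * v $ i + (if Suc i < n then \<beta> * v $ Suc i else 0)"
proof -
  have "(jacobi_mat n a \<beta> *\<^sub>v v) $ i = (\<Sum>l<n. (if l = i - 1 \<and> 0 < i then \<beta> * v $ l else 0)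
      + (if l = i then a i * v $ l else 0) + (if l = Suc i then \<beta> * v $ l else 0))"
    using assms by (auto simp: jacobi_mat_def scalar_prod_def lessThan_atLeast0 intro!: sum.cong)
  also have "\<dots> = (if 0 < i then \<beta> * v $ (i - 1) else 0) + a i * v $ i
      + (if Suc i < n then \<beta> * v $ Suc i else 0)"
    using assms(2) by (auto simp: sum.distrib)
  finally show ?thesis .
qed

text \<open>The coordinates of the unique (up to scaling) candidate eigenvector for \<open>\<mu>\<close>: all rows of
  \<open>J v = \<mu> v\<close> but the last are the three-term recurrence.\<close>

definition jacobi_eigencoord :: "(nat \<Rightarrow> 'a :: field) \<Rightarrow> 'a \<Rightarrow> 'a \<Rightarrow> nat \<Rightarrow> 'a" where
  "jacobi_eigencoord a \<beta> \<mu> j = poly (three_term_poly a (\<beta>\<^sup>2) j) \<mu> / \<beta> ^ j"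

lemma jacobi_eigencoord_0 [simp]: "jacobi_eigencoord a \<beta> \<mu> 0 = 1"
  by (simp add: jacobi_eigencoord_def)

lemma jacobi_eigencoord_Suc:
  assumes "\<beta> \<noteq> 0"
  shows "\<beta> * jacobi_eigencoord a \<beta> \<mu> (Suc j) = (\<mu> - a j) * jacobi_eigencoord a \<beta> \<mu> j
    - (if 0 < j then \<beta> * jacobi_eigencoord a \<beta> \<mu> (j - 1) else 0)"
proof (cases j)
  case (Suc i)
  then show ?thesis
    using assms by (simp add: jacobi_eigencoord_def field_simps power2_eq_square)
qed (use assms in \<open>simp add: jacobi_eigencoord_def\<close>)

lemma jacobi_mat_mult_eigencoord:
  fixes a :: "nat \<Rightarrow> 'a :: field"
  assumes "\<beta> \<noteq> 0" "i < n"
  shows "(jacobi_mat n a \<beta> *\<^sub>v vec n (jacobi_eigencoord a \<beta> \<mu>)) $ i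
    = \<mu> * jacobi_eigencoord a \<beta> \<mu> i - (if Suc i = n then \<beta> * jacobi_eigencoord a \<beta> \<mu> n else 0)"
proof -
  let ?c = "jacobi_eigencoord a \<beta> \<mu>"
  have rec: "\<beta> * ?c (Suc i) = (\<mu> - a i) * ?c i - (if 0 < i then \<beta> * ?c (i - 1) else 0)"
    by (rule jacobi_eigencoord_Suc[OF assms(1)])
  have "(jacobi_mat n a \<beta> *\<^sub>v vec n ?c) $ i = (if 0 < i then \<beta> * ?c (i - 1) else 0)
      + a i * ?c i + (if Suc i < n then \<beta> * ?c (Suc i) else 0)"
    using jacobi_mat_mult_vec[of "vec n ?c" n i a \<beta>] assms(2) by simp
  also have "\<dots> = \<mu> * ?c i - (if Suc i = n then \<beta> * ?c (Suc i) else 0)"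
    using assms(2) rec by (cases "Suc i < n") (simp_all add: algebra_simps)
  finally show ?thesis by auto
qed

lemma jacobi_eigenvector_Suc:
  fixes a :: "nat \<Rightarrow> 'a :: field"
  assumes v: "eigenvector (jacobi_mat n a \<beta>) v \<mu>" and "Suc i < n"
  shows "\<beta> * v $ Suc i = (\<mu> - a i) * v $ i - (if 0 < i then \<beta> * v $ (i - 1) else 0)"
proof -
  have carrier: "v \<in> carrier_vec n" using v by (simp add: eigenvector_def)
  have "\<mu> * v $ i = (\<mu> \<cdot>\<^sub>v v) $ i"
    using carrier assms(2) by simp
  also have "\<dots> = (jacobi_mat n a \<beta> *\<^sub>v v) $ i"
    using v by (simp add: eigenvector_def)
  also have "\<dots> = (if 0 < i then \<beta> * v $ (i - 1) else 0) + a i * v $ i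
      + (if Suc i < n then \<beta> * v $ Suc i else 0)"
    using assms(2) by (intro jacobi_mat_mult_vec[OF carrier]) simp
  finally show ?thesis using assms(2) by (simp add: algebra_simps)
qed

lemma jacobi_eigenvector_eq_eigencoord:
  fixes a :: "nat \<Rightarrow> 'a :: field"
  assumes "\<beta> \<noteq> 0" and v: "eigenvector (jacobi_mat n a \<beta>) v \<mu>"
  shows "v = v $ 0 \<cdot>\<^sub>v vec n (jacobi_eigencoord a \<beta> \<mu>)"
proof -
  let ?c = "jacobi_eigencoord a \<beta> \<mu>"
  have coord: "v $ j = v $ 0 * ?c j" if "j < n" for j
    using that
  proof (induction j rule: less_induct)
    case (less j)
    show ?case
    proof (cases j)
      case (Suc i)
      have IH: "v $ i = v $ 0 * ?c i"
        using less.IH[of i] less.prems Suc by simp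
      have IH': "v $ (i - 1) = v $ 0 * ?c (i - 1)" if "0 < i"
        using less.IH[of "i - 1"] less.prems Suc that by simp
      have "\<beta> * v $ j = (\<mu> - a i) * v $ i - (if 0 < i then \<beta> * v $ (i - 1) else 0)"
        using jacobi_eigenvector_Suc[OF v, of i] less.prems Suc by simp
      also have "\<dots> = v $ 0 * ((\<mu> - a i) * ?c i - (if 0 < i then \<beta> * ?c (i - 1) else 0))"
      proof (cases "0 < i")
        case True
        then show ?thesis using IH IH' by (simp add: algebra_simps)
      qed simp
      also have "\<dots> = v $ 0 * (\<beta> * ?c j)"
        using jacobi_eigencoord_Suc[OF assms(1), where a = a and \<mu> = \<mu> and j = i] Suc by simp
      finally show ?thesis using assms(1) by simp
    qed simp
  qed
  show ?thesis
  proof (rule eq_vecI)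
    fix j assume "j < dim_vec (v $ 0 \<cdot>\<^sub>v vec n ?c)"
    then show "v $ j = (v $ 0 \<cdot>\<^sub>v vec n ?c) $ j" using coord[of j] by simp
  qed (use v in \<open>simp add: eigenvector_def\<close>)
qed

lemma eigenvalue_jacobi_mat_iff:
  fixes a :: "nat \<Rightarrow> 'a :: field"
  assumes "\<beta> \<noteq> 0" "0 < n"
  shows "eigenvalue (jacobi_mat n a \<beta>) \<mu> \<longleftrightarrow> poly (three_term_poly a (\<beta>\<^sup>2) n) \<mu> = 0"
proof -
  let ?J = "jacobi_mat n a \<beta>" and ?c = "jacobi_eigencoord a \<beta> \<mu>"
  let ?u = "vec n ?c"
  have last_row: "(?J *\<^sub>v ?u) $ (n - 1) = \<mu> * ?c (n - 1) - \<beta> * ?c n"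
    using jacobi_mat_mult_eigencoord[OF assms(1), where i = "n - 1" and n = n and a = a and \<mu> = \<mu>]
      assms(2)
    by simp
  have "eigenvalue ?J \<mu> \<longleftrightarrow> ?c n = 0"
  proof
    assume "eigenvalue ?J \<mu>"
    then obtain v where v: "eigenvector ?J v \<mu>" by (auto simp: eigenvalue_def)
    then have v_eq: "v = v $ 0 \<cdot>\<^sub>v ?u" by (rule jacobi_eigenvector_eq_eigencoord[OF assms(1)])
    have "v $ 0 \<noteq> 0"
    proof
      assume "v $ 0 = 0"
      then have "v = 0\<^sub>v n" using v_eq by (auto simp: vec_eq_iff)
      then show False using v by (simp add: eigenvector_def)
    qed
    have "v $ 0 * (\<mu> * ?c (n - 1)) = (\<mu> \<cdot>\<^sub>v v) $ (n - 1)"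
      using assms(2) by (subst v_eq) simp
    also have "\<mu> \<cdot>\<^sub>v v = ?J *\<^sub>v v" using v by (simp add: eigenvector_def)
    also have "\<dots> = v $ 0 \<cdot>\<^sub>v (?J *\<^sub>v ?u)"
      by (subst v_eq) (rule mult_mat_vec[of _ n n]; simp)
    also have "\<dots> $ (n - 1) = v $ 0 * (?J *\<^sub>v ?u) $ (n - 1)"
      using assms(2) by simp
    also have "\<dots> = v $ 0 * (\<mu> * ?c (n - 1) - \<beta> * ?c n)"
      by (simp only: last_row)
    finally have "v $ 0 * (\<beta> * ?c n) = 0"
      by (simp add: right_diff_distrib)
    then show "?c n = 0" using \<open>v $ 0 \<noteq> 0\<close> assms(1) by simp
  next
    assume "?c n = 0"
    have "?J *\<^sub>v ?u = \<mu> \<cdot>\<^sub>v ?u"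
    proof (rule eq_vecI)
      fix i assume "i < dim_vec (\<mu> \<cdot>\<^sub>v ?u)"
      then show "(?J *\<^sub>v ?u) $ i = (\<mu> \<cdot>\<^sub>v ?u) $ i"
        using jacobi_mat_mult_eigencoord[OF assms(1), where i = i and n = n and a = a and \<mu> = \<mu>]
          \<open>?c n = 0\<close> by simp
    qed simp
    moreover have "?u \<noteq> 0\<^sub>v n" using assms(2) by (auto simp: vec_eq_iff)
    ultimately show "eigenvalue ?J \<mu>"
      unfolding eigenvalue_def eigenvector_def by (intro exI[of _ ?u]) simp
  qed
  also have "\<dots> \<longleftrightarrow> poly (three_term_poly a (\<beta>\<^sup>2) n) \<mu> = 0"
    using assms(1) by (simp add: jacobi_eigencoord_def)
  finally show ?thesis .
qed

section \<open>Matrices that are inverse up to a scalar\<close>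

lemma eigenvalue_scalar_inverse:
  fixes A B :: "'a :: field mat"
  assumes A: "A \<in> carrier_mat n n" and B: "B \<in> carrier_mat n n"
    and BA: "B * A = c \<cdot>\<^sub>m 1\<^sub>m n" and "c \<noteq> 0" and "eigenvalue A e"
  shows "e \<noteq> 0 \<and> eigenvalue B (c / e)"
proof -
  obtain v where v: "v \<in> carrier_vec n" "v \<noteq> 0\<^sub>v n" "A *\<^sub>v v = e \<cdot>\<^sub>v v"
    using A \<open>eigenvalue A e\<close> by (auto simp: eigenvalue_def eigenvector_def)
  have "c \<cdot>\<^sub>v v = (B * A) *\<^sub>v v" using BA v(1) by auto
  also have "\<dots> = B *\<^sub>v (A *\<^sub>v v)" using A B v(1) by simp
  also have "\<dots> = e \<cdot>\<^sub>v (B *\<^sub>v v)" using B v by (simp add: mult_mat_vec)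
  finally have eq: "c * v $ i = e * (B *\<^sub>v v) $ i" if "i < n" for i
    using B v(1) that by (auto simp: vec_eq_iff)
  have "e \<noteq> 0"
  proof
    assume "e = 0"
    then have "v = 0\<^sub>v n" using eq v(1) \<open>c \<noteq> 0\<close> by (auto simp: vec_eq_iff)
    then show False using v(2) by contradiction
  qed
  moreover have "B *\<^sub>v v = (c / e) \<cdot>\<^sub>v v"
    using eq \<open>e \<noteq> 0\<close> B v(1) by (auto simp: vec_eq_iff field_simps)
  ultimately show ?thesis
    using v B by (auto simp: eigenvalue_def eigenvector_def)
qed

lemma card_eigenvalues_scalar_inverse:
  fixes A B :: "'a :: field mat"
  assumes A: "A \<in> carrier_mat n n" and B: "B \<in> carrier_mat n n"
    and "A * B = c \<cdot>\<^sub>m 1\<^sub>m n" "B * A = c \<cdot>\<^sub>m 1\<^sub>m n" and "c \<noteq> 0"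
  shows "card {e. eigenvalue A e} = card {e. eigenvalue B e}"
proof -
  note AB = eigenvalue_scalar_inverse[OF A B assms(4,5)]
  note BA = eigenvalue_scalar_inverse[OF B A assms(3,5)]
  have "bij_betw (\<lambda>e. c / e) {e. eigenvalue A e} {e. eigenvalue B e}"
    by (rule bij_betw_byWitness[where f' = "\<lambda>e. c / e"]) (use AB BA \<open>c \<noteq> 0\<close> in auto)
  then show ?thesis by (rule bij_betw_same_card)
qed

section \<open>The Kac-Murdock-Szego matrix\<close>

definition kms_scaled_inverse :: "nat \<Rightarrow> real \<Rightarrow> real mat" where
  "kms_scaled_inverse n \<rho> =
     jacobi_mat n (\<lambda>j. if j = 0 \<or> j = n - 1 then 1 else 1 + \<rho>\<^sup>2) (- \<rho>)"

lemma dim_kms_matrix [simp]: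
  "dim_row (kms_matrix n \<rho>) = n" "dim_col (kms_matrix n \<rho>) = n"
  by (simp_all add: kms_matrix_def)

lemma kms_matrix_carrier [simp]: "kms_matrix n \<rho> \<in> carrier_mat n n"
  by (simp add: carrier_matI)

lemma kms_scaled_inverse_carrier [simp]: "kms_scaled_inverse n \<rho> \<in> carrier_mat n n"
  by (simp add: kms_scaled_inverse_def)

lemma kms_matrix_entry:
  "j < n \<Longrightarrow> k < n \<Longrightarrow> kms_matrix n \<rho> $$ (j, k) = \<rho> ^ (if j \<le> k then k - j else j - k)"
  by (simp add: kms_matrix_def)

lemma kms_scaled_inverse_mult_col:
  assumes "2 \<le> n" "j < n" "k < n"
  shows "(kms_scaled_inverse n \<rho> *\<^sub>v col (kms_matrix n \<rho>) k) $ j = (if j = k then 1 - \<rho>\<^sup>2 else 0)"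
proof -
  have "(kms_scaled_inverse n \<rho> *\<^sub>v col (kms_matrix n \<rho>) k) $ j
      = (if 0 < j then - \<rho> * col (kms_matrix n \<rho>) k $ (j - 1) else 0)
      + (if j = 0 \<or> j = n - 1 then 1 else 1 + \<rho>\<^sup>2) * col (kms_matrix n \<rho>) k $ j
      + (if Suc j < n then - \<rho> * col (kms_matrix n \<rho>) k $ Suc j else 0)"
    unfolding kms_scaled_inverse_def using assms by (intro jacobi_mat_mult_vec) simp_all
  also have "\<dots> = (if j = k then 1 - \<rho>\<^sup>2 else 0)"
  proof (cases k j rule: linorder_cases)
    case less
    then obtain e where "j = k + Suc e" by (metis less_imp_Suc_add add_Suc_right)
    then show ?thesis
      using assms
      by (cases "Suc j < n") (auto simp: kms_matrix_entry power_add power2_eq_square algebra_simps)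
  next
    case equal
    then show ?thesis
      using assms by (auto simp: kms_matrix_entry power2_eq_square algebra_simps)
  next
    case greater
    then obtain e where "k = j + Suc e" by (metis less_imp_Suc_add add_Suc_right)
    then show ?thesis
      using assms by (cases j) (auto simp: kms_matrix_entry power_add power2_eq_square algebra_simps)
  qed
  finally show ?thesis .
qed

lemma kms_scaled_inverse_mult_kms_matrix:
  assumes "2 \<le> n"
  shows "kms_scaled_inverse n \<rho> * kms_matrix n \<rho> = (1 - \<rho>\<^sup>2) \<cdot>\<^sub>m 1\<^sub>m n"
proof (rule eq_matI)
  fix j k assume "j < dim_row ((1 - \<rho>\<^sup>2) \<cdot>\<^sub>m 1\<^sub>m n)" "k < dim_col ((1 - \<rho>\<^sup>2) \<cdot>\<^sub>m 1\<^sub>m n)"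
  then have "j < n" "k < n" by simp_all
  then show "(kms_scaled_inverse n \<rho> * kms_matrix n \<rho>) $$ (j, k) = ((1 - \<rho>\<^sup>2) \<cdot>\<^sub>m 1\<^sub>m n) $$ (j, k)"
    using kms_scaled_inverse_mult_col[OF assms, of j k \<rho>] by (simp add: kms_scaled_inverse_def)
qed (simp_all add: kms_scaled_inverse_def)

lemma transpose_kms_matrix: "transpose_mat (kms_matrix n \<rho>) = kms_matrix n \<rho>"
  by (rule eq_matI) (auto simp: kms_matrix_def)

lemma transpose_jacobi_mat: "transpose_mat (jacobi_mat n a \<beta>) = jacobi_mat n a \<beta>"
  by (rule eq_matI) (auto simp: jacobi_mat_def)

lemma kms_matrix_mult_kms_scaled_inverse:
  assumes "2 \<le> n"
  shows "kms_matrix n \<rho> * kms_scaled_inverse n \<rho> = (1 - \<rho>\<^sup>2) \<cdot>\<^sub>m 1\<^sub>m n"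
proof -
  have "kms_matrix n \<rho> * kms_scaled_inverse n \<rho>
      = transpose_mat (kms_scaled_inverse n \<rho> * kms_matrix n \<rho>)"
    by (simp add: transpose_mult[of _ n n _ n] transpose_kms_matrix transpose_jacobi_mat
        kms_scaled_inverse_def)
  also have "\<dots> = (1 - \<rho>\<^sup>2) \<cdot>\<^sub>m 1\<^sub>m n"
    by (simp add: kms_scaled_inverse_mult_kms_matrix[OF assms]) (rule eq_matI; auto)
  finally show ?thesis .
qed

theorem proposition6p1:
  fixes n :: nat and \<rho> :: real
  assumes "n \<ge> 2" and "\<rho> \<notin> {-1, 0, 1}"
  shows "card {e. eigenvalue (kms_matrix n \<rho>) e} = n"
proof -
  have "\<rho> \<noteq> 0" "1 - \<rho>\<^sup>2 \<noteq> 0"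
    using assms(2) by (auto simp: power2_eq_1_iff)
  have "card {e. eigenvalue (kms_matrix n \<rho>) e} = card {\<mu>. eigenvalue (kms_scaled_inverse n \<rho>) \<mu>}"
    by (rule card_eigenvalues_scalar_inverse[OF kms_matrix_carrier kms_scaled_inverse_carrier
          kms_matrix_mult_kms_scaled_inverse[OF assms(1)]
          kms_scaled_inverse_mult_kms_matrix[OF assms(1)] \<open>1 - \<rho>\<^sup>2 \<noteq> 0\<close>])
  also have "\<dots> = card {\<mu>. poly (three_term_poly
      (\<lambda>j. if j = 0 \<or> j = n - 1 then 1 else 1 + \<rho>\<^sup>2) ((- \<rho>)\<^sup>2) n) \<mu> = 0}"
    using eigenvalue_jacobi_mat_iff[of "- \<rho>" n] \<open>\<rho> \<noteq> 0\<close> assms(1)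
    by (simp add: kms_scaled_inverse_def)
  also have "\<dots> = n"
    using \<open>\<rho> \<noteq> 0\<close> by (intro card_roots_three_term_poly) simp
  finally show ?thesis .
qed

end
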